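(* Let $a\in\mathbb{R}$, $b\in(a,\infty)$, $h\in\mathbb{N}$, $v_1,\dots,v_h,w_1,\dots,w_h\in(0,\infty)$, let $f,p\in C(\mathbb{R},\mathbb{R})$ satisfy for all $x\in\mathbb{R}$ that $p(x)\ge0$ and $p^{-1}((0,\infty))=(a,b)$, with $\mathcal{L}$, $I_i^\theta$, $\operatorname{Lip}$ as in the context. Assume $\operatorname{Lip}(f)<\min_{i\in\{1,\dots,h\}}v_iw_i$, let $\theta\in\mathbb{R}^{h+1}$ satisfy $(\nabla\mathcal{L})(\theta)=0$, and let $i,j\in\{1,\dots,h\}$ satisfy $I_i^\theta\cap I_j^\theta\neq\emptyset$. Then $I_i^\theta\subseteq I_j^\theta$ or $I_j^\theta\subseteq I_i^\theta$.
   Context: Let $\mathfrak{c}(x)=\min\{\max\{x,0\},1\}$. For $F\in C(\mathbb{R},\mathbb{R})$ let $\operatorname{Lip}(F)=\sup_{x,y\in[a,b],x\ne y}\frac{|F(x)-F(y)|}{|x-y|}$. For $\theta=(\theta_1,\dots,\theta_{h+1})\in\mathbb{R}^{h+1}$ and $i\in\{1,\dots,h\}$ let $\psi_i(\theta)=-[w_i]^{-1}\theta_i$, $I_i^\theta=(\psi_i(\theta),\psi_i(\theta)+[w_i]^{-1})\cap(a,b)$, $\mathcal{N}^\theta(x)=\theta_{h+1}+\sum_{i=1}^hv_i\mathfrak{c}(w_ix+\theta_i)$, and $\mathcal{L}(\theta)=\int_a^b(\mathcal{N}^\theta(x)-f(x))^2p(x)\,\mathrm{d}x$ ($\mathcal{L}$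 is continuously differentiable). *)

theory Defs
  imports "HOL-Analysis.Analysis"
begin

definition clip :: "real \<Rightarrow> real" where
  "clip x = min (max x 0) 1"

definition Lip :: "(real \<Rightarrow> real) \<Rightarrow> real \<Rightarrow> real \<Rightarrow> ereal" where
  "Lip F a b = (SUP xy \<in> {(x, y). x \<in> {a..b} \<and> y \<in> {a..b} \<and> x \<noteq> y}.
      ereal (\<bar>F (fst xy) - F (snd xy)\<bar> / \<bar>fst xy - snd xy\<bar>))"

text \<open>Parameters theta are vectors indexed by 1..h+1, represented as nat => real.\<close>
definition psi :: "(nat \<Rightarrow> real) \<Rightarrow> (nat \<Rightarrow> real) \<Rightarrow> nat \<Rightarrow> real" where
  "psi w \<theta> i = - (1 / w i) * \<theta> i"

definition Ival :: "real \<Rightarrow> real \<Rightarrow> (nat \<Rightarrow> real) \<Rightarrow> (nat \<Rightarrow> real) \<Rightarrow> nat \<Rightarrow> real set" where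
  "Ival a b w \<theta> i = {psi w \<theta> i <..< psi w \<theta> i + 1 / w i} \<inter> {a<..<b}"

definition NN :: "nat \<Rightarrow> (nat \<Rightarrow> real) \<Rightarrow> (nat \<Rightarrow> real) \<Rightarrow> (nat \<Rightarrow> real) \<Rightarrow> real \<Rightarrow> real" where
  "NN h v w \<theta> x = \<theta> (h + 1) + (\<Sum>i = 1..h. v i * clip (w i * x + \<theta> i))"

definition Loss :: "real \<Rightarrow> real \<Rightarrow> nat \<Rightarrow> (nat \<Rightarrow> real) \<Rightarrow> (nat \<Rightarrow> real)
    \<Rightarrow> (real \<Rightarrow> real) \<Rightarrow> (real \<Rightarrow> real) \<Rightarrow> (nat \<Rightarrow> real) \<Rightarrow> real" where
  "Loss a b h v w f p \<theta> = integral {a..b} (\<lambda>x. (NN h v w \<theta> x - f x)\<^sup>2 * p x)"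

definition grad_zero :: "nat \<Rightarrow> ((nat \<Rightarrow> real) \<Rightarrow> real) \<Rightarrow> (nat \<Rightarrow> real) \<Rightarrow> bool" where
  "grad_zero h L \<theta> = (\<forall>k \<in> {1..h+1}. ((\<lambda>t. L (\<theta>(k := t))) has_real_derivative 0) (at (\<theta> k)))"

end

theory Submission
  imports Defs
begin

text \<open>Write \<open>g = N\<^sup>\<theta> - f\<close> for the residual. Since \<open>clip\<close> has the indicator of \<open>[0,1)\<close> as its right
  derivative, the vanishing partial derivative of \<open>L\<close> in \<open>\<theta>\<^sub>k\<close> says that \<open>\<integral> g p\<close> vanishes over \<open>I\<^sub>k\<close>.
  On the closure of \<open>I\<^sub>k\<close> the \<open>k\<close>-th neuron is affine with slope \<open>v\<^sub>k w\<^sub>k > Lip(f)\<close> and all other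
  neurons are nondecreasing, so \<open>g\<close> is strictly increasing there. If \<open>I\<^sub>i = (l\<^sub>i, r\<^sub>i)\<close> and
  \<open>I\<^sub>j = (l\<^sub>j, r\<^sub>j)\<close> crossed, say \<open>l\<^sub>i < l\<^sub>j < r\<^sub>i < r\<^sub>j\<close>, then \<open>g\<close> would be strictly increasing on
  \<open>[l\<^sub>i, r\<^sub>j]\<close> and \<open>\<integral> g p\<close> would vanish over both intervals: impossible for a function with a
  single sign change, because the two integrals share the part over the overlap, while the part of
  \<open>I\<^sub>i\<close> left of it is negative and the part of \<open>I\<^sub>j\<close> right of it is positive.\<close>

lemma continuous_on_clip [continuous_intros]:
  "continuous_on S g \<Longrightarrow> continuous_on S (\<lambda>x. clip (g x))"
  unfolding clip_def by (intro continuous_intros)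

lemma clip_mono: "u \<le> u' \<Longrightarrow> clip u \<le> clip u'"
  by (auto simp: clip_def)

lemma clip_eq_self: "0 \<le> u \<Longrightarrow> u \<le> 1 \<Longrightarrow> clip u = u"
  by (auto simp: clip_def)

lemma abs_clip_diff_le: "\<bar>clip (u + s) - clip u\<bar> \<le> \<bar>s\<bar>"
  by (auto simp: clip_def)

lemma eventually_clip_increment:
  "\<forall>\<^sub>F s in at_right 0. clip (u + s) - clip u = s * indicator {0..<1} u"
proof -
  consider "u < 0" | "0 \<le> u" "u < 1" | "1 \<le> u" by linarith
  then obtain e where "e > 0" and e: "\<And>s. s \<in> {0<..<e} \<Longrightarrow> clip (u + s) - clip u = s * indicator {0..<1} u"
  proof cases
    case 1
    show ?thesis by (rule that[of "- u"]) (use 1 in \<open>auto simp: clip_def\<close>)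
  next
    case 2
    show ?thesis by (rule that[of "1 - u"]) (use 2 in \<open>auto simp: clip_def\<close>)
  next
    case 3
    show ?thesis by (rule that[of 1]) (use 3 in \<open>auto simp: clip_def\<close>)
  qed
  show ?thesis
    using eventually_at_right_real[OF \<open>e > 0\<close>] by eventually_elim (rule e)
qed

lemma integral_pos_if_pos_on_interior:
  fixes G :: "real \<Rightarrow> real"
  assumes "c < d" and G: "continuous_on {c..d} G"
    and nonneg: "\<forall>x\<in>{c..d}. 0 \<le> G x" and pos: "\<forall>x\<in>{c<..<d}. 0 < G x"
  shows "0 < integral {c..d} G"
proof -
  have int: "G integrable_on {c..d}"
    using G integrable_continuous_interval by blast
  have "integral {c..d} G \<noteq> 0"
  proof
    assume "integral {c..d} G = 0"
    then have "(G has_integral 0) (cbox c d)"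
      using int by (metis cbox_interval has_integral_integral)
    then have "G ((c + d) / 2) = 0"
      by (rule has_integral_0_cbox_imp_0[rotated 2]) (use assms in \<open>auto simp: cbox_interval\<close>)
    moreover have "(c + d) / 2 \<in> {c<..<d}" using \<open>c < d\<close> by simp
    ultimately show False using pos by fastforce
  qed
  moreover have "0 \<le> integral {c..d} G"
    using int nonneg by (intro integral_nonneg) auto
  ultimately show ?thesis by linarith
qed

lemma integral_indicator_Ico_mult:
  fixes G :: "real \<Rightarrow> real"
  shows "integral {a..b} (\<lambda>x. indicator {c..<d} x * G x) = integral {max a c..min b d} G"
proof -
  have "integral {a..b} (\<lambda>x. indicator {c..<d} x * G x) = integral ({c..<d} \<inter> {a..b}) G"
    unfolding indicator_times_eq_if by (rule integral_restrict_Int)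
  also have "\<dots> = integral {max a c..min b d} G"
    by (rule integral_spike_set; rule negligible_subset[of "{min b d}"]) auto
  finally show ?thesis .
qed

lemma integral_tendsto_at_right_dominated:
  fixes q :: "real \<Rightarrow> real \<Rightarrow> real"
  assumes "c < d"
    and int: "\<And>s. s \<in> {c<..<d} \<Longrightarrow> q s integrable_on S"
    and D: "D integrable_on S"
    and bound: "\<And>s x. s \<in> {c<..<d} \<Longrightarrow> x \<in> S \<Longrightarrow> \<bar>q s x\<bar> \<le> D x"
    and lim: "\<And>x. x \<in> S \<Longrightarrow> ((\<lambda>s. q s x) \<longlongrightarrow> Q x) (at_right c)"
  shows "((\<lambda>s. integral S (q s)) \<longlongrightarrow> integral S Q) (at_right c)"
proof (rule tendsto_at_right_sequentially[OF \<open>c < d\<close>])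
  fix \<sigma> :: "nat \<Rightarrow> real"
  assume \<sigma>: "\<And>n. c < \<sigma> n" "\<And>n. \<sigma> n < d" "\<sigma> \<longlonglongrightarrow> c"
  have "filterlim \<sigma> (at_right c) sequentially"
    using \<sigma> by (auto simp: filterlim_at intro: always_eventually)
  then show "(\<lambda>n. integral S (q (\<sigma> n))) \<longlonglongrightarrow> integral S Q"
    using \<sigma> by (intro dominated_convergence(2)[OF int D]) (auto intro: bound filterlim_compose[OF lim])
qed

lemma abs_square_increment_le:
  fixes y \<delta> C s :: real
  assumes "\<bar>\<delta>\<bar> \<le> C * s" "0 < s" "s < 1"
  shows "\<bar>2 * y * \<delta> + \<delta>\<^sup>2\<bar> \<le> (2 * \<bar>y\<bar> * C + C\<^sup>2) * s"
proof -
  have "s * s \<le> 1 * s" using assms by (intro mult_right_mono) auto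
  then have sq: "(C * s)\<^sup>2 \<le> C\<^sup>2 * s"
    using mult_left_mono[of "s * s" s "C\<^sup>2"] by (simp add: power2_eq_square algebra_simps)
  have "\<bar>2 * y * \<delta> + \<delta>\<^sup>2\<bar> \<le> 2 * \<bar>y\<bar> * \<bar>\<delta>\<bar> + \<bar>\<delta>\<bar>\<^sup>2"
    using abs_triangle_ineq[of "2 * y * \<delta>" "\<delta>\<^sup>2"] by (simp add: abs_mult)
  also have "\<dots> \<le> 2 * \<bar>y\<bar> * (C * s) + (C * s)\<^sup>2"
    using assms by (intro add_mono mult_left_mono power_mono) auto
  also have "\<dots> \<le> (2 * \<bar>y\<bar> * C + C\<^sup>2) * s"
    using sq by (simp add: algebra_simps)
  finally show ?thesis .
qed

lemma weighted_square_integral_right_derivative: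
  fixes g p \<rho> :: "real \<Rightarrow> real" and \<Delta> :: "real \<Rightarrow> real \<Rightarrow> real"
  assumes g: "continuous_on {a..b} g" and p: "continuous_on {a..b} p"
    and \<Delta>: "\<And>s. continuous_on {a..b} (\<Delta> s)"
    and bound: "\<And>s x. 0 < s \<Longrightarrow> \<bar>\<Delta> s x\<bar> \<le> C * s"
    and incr: "\<And>x. \<forall>\<^sub>F s in at_right 0. \<Delta> s x = s * \<rho> x"
  shows "((\<lambda>s. (integral {a..b} (\<lambda>x. (g x + \<Delta> s x)\<^sup>2 * p x)
                  - integral {a..b} (\<lambda>x. (g x)\<^sup>2 * p x)) / s)
           \<longlongrightarrow> integral {a..b} (\<lambda>x. 2 * g x * \<rho> x * p x)) (at_right 0)"
proof -
  define q where "q s x = (2 * g x * \<Delta> s x + (\<Delta> s x)\<^sup>2) * p x / s" for s x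
  have quotient: "(integral {a..b} (\<lambda>x. (g x + \<Delta> s x)\<^sup>2 * p x)
                  - integral {a..b} (\<lambda>x. (g x)\<^sup>2 * p x)) / s = integral {a..b} (q s)" for s
  proof -
    have "(\<lambda>x. (g x + \<Delta> s x)\<^sup>2 * p x) integrable_on {a..b}" "(\<lambda>x. (g x)\<^sup>2 * p x) integrable_on {a..b}"
      by (intro integrable_continuous_interval continuous_intros g p \<Delta>)+
    then have "integral {a..b} (\<lambda>x. (g x + \<Delta> s x)\<^sup>2 * p x) - integral {a..b} (\<lambda>x. (g x)\<^sup>2 * p x)
        = integral {a..b} (\<lambda>x. (g x + \<Delta> s x)\<^sup>2 * p x - (g x)\<^sup>2 * p x)"
      by (rule integral_diff[symmetric])
    also have "(\<lambda>x. (g x + \<Delta> s x)\<^sup>2 * p x - (g x)\<^sup>2 * p x) = (\<lambda>x. (2 * g x * \<Delta> s x + (\<Delta> s x)\<^sup>2) * p x)"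
      by (simp add: fun_eq_iff power2_eq_square algebra_simps)
    finally show ?thesis by (simp add: q_def[abs_def])
  qed
  have "((\<lambda>s. integral {a..b} (q s)) \<longlongrightarrow> integral {a..b} (\<lambda>x. 2 * g x * \<rho> x * p x)) (at_right 0)"
  proof (rule integral_tendsto_at_right_dominated[where d = 1])
    show "q s integrable_on {a..b}" if "s \<in> {0<..<1}" for s
      unfolding q_def using that by (intro integrable_continuous_interval continuous_intros g p \<Delta>) auto
    show "(\<lambda>x. (2 * \<bar>g x\<bar> * C + C\<^sup>2) * \<bar>p x\<bar>) integrable_on {a..b}"
      by (intro integrable_continuous_interval continuous_intros g p)
    show "\<bar>q s x\<bar> \<le> (2 * \<bar>g x\<bar> * C + C\<^sup>2) * \<bar>p x\<bar>" if s: "s \<in> {0<..<1}" for s x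
    proof -
      have "\<bar>2 * g x * \<Delta> s x + (\<Delta> s x)\<^sup>2\<bar> * \<bar>p x\<bar> / s \<le> (2 * \<bar>g x\<bar> * C + C\<^sup>2) * s * \<bar>p x\<bar> / s"
        using s bound[of s x] by (intro divide_right_mono mult_right_mono abs_square_increment_le) auto
      then show ?thesis
        using s by (simp add: q_def abs_mult)
    qed
    show "((\<lambda>s. q s x) \<longlongrightarrow> 2 * g x * \<rho> x * p x) (at_right 0)" for x
    proof -
      have "\<forall>\<^sub>F s in at_right 0. (2 * g x * \<rho> x + s * (\<rho> x)\<^sup>2) * p x = q s x"
        using incr[of x] eventually_at_right_less[of 0]
        by eventually_elim (simp add: q_def power2_eq_square field_simps)
      moreover have "((\<lambda>s. (2 * g x * \<rho> x + s * (\<rho> x)\<^sup>2) * p x)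
          \<longlongrightarrow> (2 * g x * \<rho> x + 0 * (\<rho> x)\<^sup>2) * p x) (at_right 0)"
        by (intro tendsto_intros)
      ultimately show ?thesis by (simp add: Lim_transform_eventually)
    qed
  qed simp
  then show ?thesis by (simp only: quotient)
qed

lemma integral_mult_pos_if_strict_mono_on:
  fixes g p :: "real \<Rightarrow> real"
  assumes "c < d" and mono: "strict_mono_on {c..d} g" and "0 \<le> g c"
    and g: "continuous_on {c..d} g" and p: "continuous_on {c..d} p"
    and p_nonneg: "\<forall>x\<in>{c..d}. 0 \<le> p x" and p_pos: "\<forall>x\<in>{c<..<d}. 0 < p x"
  shows "0 < integral {c..d} (\<lambda>x. g x * p x)"
proof (rule integral_pos_if_pos_on_interior[OF \<open>c < d\<close>])
  have g_pos: "0 < g x" if "c < x" "x \<le> d" for x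
    using \<open>0 \<le> g c\<close> strict_mono_onD[OF mono, of c x] that \<open>c < d\<close> by simp
  have "0 \<le> g x" if "x \<in> {c..d}" for x
    using g_pos[of x] \<open>0 \<le> g c\<close> that by (cases "c < x") auto
  then show "\<forall>x\<in>{c..d}. 0 \<le> g x * p x"
    using p_nonneg by simp
  show "\<forall>x\<in>{c<..<d}. 0 < g x * p x"
    using g_pos p_pos by simp
qed (intro continuous_intros g p)

lemma integral_mult_neg_if_strict_mono_on:
  fixes g p :: "real \<Rightarrow> real"
  assumes "c < d" and mono: "strict_mono_on {c..d} g" and "g d \<le> 0"
    and g: "continuous_on {c..d} g" and p: "continuous_on {c..d} p"
    and p_nonneg: "\<forall>x\<in>{c..d}. 0 \<le> p x" and p_pos: "\<forall>x\<in>{c<..<d}. 0 < p x"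
  shows "integral {c..d} (\<lambda>x. g x * p x) < 0"
proof -
  have "0 < integral {c..d} (\<lambda>x. - g x * p x)"
  proof (rule integral_pos_if_pos_on_interior[OF \<open>c < d\<close>])
    have g_neg: "g x < 0" if "c \<le> x" "x < d" for x
      using \<open>g d \<le> 0\<close> strict_mono_onD[OF mono, of x d] that \<open>c < d\<close> by simp
    have "g x \<le> 0" if "x \<in> {c..d}" for x
      using g_neg[of x] \<open>g d \<le> 0\<close> that by (cases "x < d") auto
    then show "\<forall>x\<in>{c..d}. 0 \<le> - g x * p x"
      using p_nonneg by (simp add: mult_nonpos_nonneg)
    show "\<forall>x\<in>{c<..<d}. 0 < - g x * p x"
      using g_neg p_pos by (simp add: mult_neg_pos)
  qed (intro continuous_intros g p)
  then show ?thesis by simp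
qed

lemma crossing_weighted_integrals_not_both_zero:
  fixes g p :: "real \<Rightarrow> real"
  assumes cross: "l1 < l2" "l2 < r1" "r1 < r2"
    and mono: "strict_mono_on {l1..r2} g"
    and g: "continuous_on {l1..r2} g" and p: "continuous_on {l1..r2} p"
    and p_nonneg: "\<forall>x\<in>{l1..r2}. 0 \<le> p x" and p_pos: "\<forall>x\<in>{l1<..<r2}. 0 < p x"
    and zero1: "integral {l1..r1} (\<lambda>x. g x * p x) = 0"
    and zero2: "integral {l2..r2} (\<lambda>x. g x * p x) = 0"
  shows False
proof -
  have sub: "{c..d} \<subseteq> {l1..r2}" "{c<..<d} \<subseteq> {l1<..<r2}" if "l1 \<le> c" "d \<le> r2" for c d
    using that by auto
  note on_sub = monotone_on_subset[OF mono sub(1)] continuous_on_subset[OF g sub(1)]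
    continuous_on_subset[OF p sub(1)] subsetD[OF sub(1)] subsetD[OF sub(2)]
  have pos: "0 < integral {c..d} (\<lambda>x. g x * p x)" if "l1 \<le> c" "c < d" "d \<le> r2" "0 \<le> g c" for c d
    using that p_nonneg p_pos by (intro integral_mult_pos_if_strict_mono_on) (auto intro: on_sub)
  have neg: "integral {c..d} (\<lambda>x. g x * p x) < 0" if "l1 \<le> c" "c < d" "d \<le> r2" "g d \<le> 0" for c d
    using that p_nonneg p_pos by (intro integral_mult_neg_if_strict_mono_on) (auto intro: on_sub)
  have int: "(\<lambda>x. g x * p x) integrable_on {c..d}" if "l1 \<le> c" "d \<le> r2" for c d
    using that by (intro integrable_continuous_interval continuous_intros on_sub)
  consider "0 \<le> g l2" | "g r1 \<le> 0" | "g l2 < 0" "0 < g r1" by linarith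
  then show False
  proof cases
    case 3
    \<comment> \<open>The sign change of \<open>g\<close> lies in the overlap \<open>[l2, r1]\<close>, whose integral is shared by both zero sums.\<close>
    have "integral {l1..l2} (\<lambda>x. g x * p x) + integral {l2..r1} (\<lambda>x. g x * p x) = 0"
      using Henstock_Kurzweil_Integration.integral_combine[OF _ _ int[of l1 r1]] cross zero1 by simp
    moreover have "integral {l2..r1} (\<lambda>x. g x * p x) + integral {r1..r2} (\<lambda>x. g x * p x) = 0"
      using Henstock_Kurzweil_Integration.integral_combine[OF _ _ int[of l2 r2]] cross zero2 by simp
    ultimately show False
      using neg[of l1 l2] pos[of r1 r2] 3 cross by simp
  qed (use pos[of l2 r2] neg[of l1 r1] cross zero1 zero2 in auto)
qed

lemma strict_mono_on_Icc_Un: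
  fixes g :: "real \<Rightarrow> real"
  assumes "strict_mono_on {l1..r1} g" "strict_mono_on {l2..r2} g" "l2 \<le> r1"
  shows "strict_mono_on {l1..r2} g"
proof (rule strict_mono_onI)
  fix x y assume xy: "x \<in> {l1..r2}" "y \<in> {l1..r2}" "x < y"
  consider "y \<le> r1" | "l2 \<le> x" | "x < l2" "r1 < y" by linarith
  then show "g x < g y"
  proof cases
    case 3
    then have "g x < g r1" using xy \<open>l2 \<le> r1\<close> by (intro strict_mono_onD[OF assms(1)]) auto
    also have "g r1 < g y" using 3 xy \<open>l2 \<le> r1\<close> by (intro strict_mono_onD[OF assms(2)]) auto
    finally show ?thesis .
  qed (use xy in \<open>auto intro: strict_mono_onD[OF assms(1)] strict_mono_onD[OF assms(2)]\<close>)
qed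

lemma Ioo_overlap_cases:
  fixes l1 r1 l2 r2 :: real
  assumes "{l1<..<r1} \<inter> {l2<..<r2} \<noteq> {}"
    and "\<not> {l1<..<r1} \<subseteq> {l2<..<r2}" "\<not> {l2<..<r2} \<subseteq> {l1<..<r1}"
  shows "(l1 < l2 \<and> l2 < r1 \<and> r1 < r2) \<or> (l2 < l1 \<and> l1 < r2 \<and> r2 < r1)"
proof -
  have "max l1 l2 < min r1 r2" using assms(1) by auto
  then show ?thesis
    using assms(2,3) unfolding greaterThanLessThan_subseteq_greaterThanLessThan by linarith
qed

lemma diff_less_of_Lip_less:
  assumes "Lip f a b < ereal m" "x \<in> {a..b}" "y \<in> {a..b}" "x < y"
  shows "f y - f x < m * (y - x)"
proof -
  have "ereal (\<bar>f x - f y\<bar> / \<bar>x - y\<bar>) \<le> Lip f a b"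
    unfolding Lip_def using assms(2-4) by (intro SUP_upper2[of "(x, y)"]) auto
  then have "ereal (\<bar>f x - f y\<bar> / \<bar>x - y\<bar>) < ereal m" using assms(1) by (rule order.strict_trans1)
  then have "\<bar>f x - f y\<bar> / \<bar>x - y\<bar> < m" by simp
  then show ?thesis using assms(4) by (simp add: field_simps)
qed

definition Ival_lo :: "real \<Rightarrow> (nat \<Rightarrow> real) \<Rightarrow> (nat \<Rightarrow> real) \<Rightarrow> nat \<Rightarrow> real" where
  "Ival_lo a w \<theta> k = max a (psi w \<theta> k)"

definition Ival_hi :: "real \<Rightarrow> (nat \<Rightarrow> real) \<Rightarrow> (nat \<Rightarrow> real) \<Rightarrow> nat \<Rightarrow> real" where
  "Ival_hi b w \<theta> k = min b (psi w \<theta> k + 1 / w k)"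

lemma Ival_eq_Ioo: "Ival a b w \<theta> k = {Ival_lo a w \<theta> k<..<Ival_hi b w \<theta> k}"
  unfolding Ival_def Ival_lo_def Ival_hi_def by auto

lemma affine_in_Ico_01_iff:
  assumes "w k > 0"
  shows "w k * x + \<theta> k \<in> {0..<1} \<longleftrightarrow> x \<in> {psi w \<theta> k..<psi w \<theta> k + 1 / w k}"
  using assms unfolding psi_def by (auto simp: field_simps)

lemma NN_fun_upd:
  assumes "k \<in> {1..h}"
  shows "NN h v w (\<theta>(k := t)) x = NN h v w \<theta> x + v k * (clip (w k * x + t) - clip (w k * x + \<theta> k))"
proof -
  have "(\<Sum>i = 1..h. v i * clip (w i * x + (\<theta>(k := t)) i))
      = (\<Sum>i = 1..h. v i * clip (w i * x + \<theta> i) + (if i = k then v k * (clip (w k * x + t) - clip (w k * x + \<theta> k)) else 0))"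
    by (intro sum.cong) (auto simp: algebra_simps)
  with assms show ?thesis
    unfolding NN_def by (simp add: sum.distrib)
qed

lemma continuous_on_NN [continuous_intros]: "continuous_on S (NN h v w \<theta>)"
  unfolding NN_def[abs_def] by (intro continuous_intros)

lemma NN_diff_ge:
  assumes k: "k \<in> {1..h}" and vw: "\<forall>k \<in> {1..h}. v k > 0 \<and> w k > 0"
    and "x \<le> y" "psi w \<theta> k \<le> x" "y \<le> psi w \<theta> k + 1 / w k"
  shows "v k * w k * (y - x) \<le> NN h v w \<theta> y - NN h v w \<theta> x"
proof -
  have pos: "0 < v i" "0 < w i" if "i \<in> {1..h}" for i using vw that by auto
  have wk: "w k > 0" using pos k by auto
  have lin: "clip (w k * z + \<theta> k) = w k * z + \<theta> k" if "psi w \<theta> k \<le> z" "z \<le> psi w \<theta> k + 1 / w k" for z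
    using that wk unfolding psi_def by (intro clip_eq_self) (auto simp: field_simps)
  have "v k * w k * (y - x) = v k * (clip (w k * y + \<theta> k) - clip (w k * x + \<theta> k))"
    using lin[of x] lin[of y] assms by (simp add: algebra_simps)
  also have "\<dots> \<le> (\<Sum>i = 1..h. v i * (clip (w i * y + \<theta> i) - clip (w i * x + \<theta> i)))"
  proof (rule member_le_sum[OF k])
    fix i assume "i \<in> {1..h} - {k}"
    then have "0 < v i" "w i * x \<le> w i * y" using pos \<open>x \<le> y\<close> by auto
    then show "0 \<le> v i * (clip (w i * y + \<theta> i) - clip (w i * x + \<theta> i))"
      by (simp add: clip_mono)
  qed simp
  also have "\<dots> = NN h v w \<theta> y - NN h v w \<theta> x"
    unfolding NN_def by (simp add: sum_subtractf algebra_simps)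
  finally show ?thesis .
qed

lemma residual_strict_mono_on_Ival:
  assumes k: "k \<in> {1..h}" and vw: "\<forall>k \<in> {1..h}. v k > 0 \<and> w k > 0"
    and Lip: "Lip f a b < ereal (Min ((\<lambda>k. v k * w k) ` {1..h}))"
  shows "strict_mono_on {Ival_lo a w \<theta> k..Ival_hi b w \<theta> k} (\<lambda>x. NN h v w \<theta> x - f x)"
proof (rule strict_mono_onI)
  fix x y assume "x \<in> {Ival_lo a w \<theta> k..Ival_hi b w \<theta> k}" "y \<in> {Ival_lo a w \<theta> k..Ival_hi b w \<theta> k}" "x < y"
  then have xy: "x \<in> {a..b}" "y \<in> {a..b}" "x < y" "psi w \<theta> k \<le> x" "y \<le> psi w \<theta> k + 1 / w k"
    unfolding Ival_lo_def Ival_hi_def by auto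
  have "f y - f x < Min ((\<lambda>k. v k * w k) ` {1..h}) * (y - x)"
    using diff_less_of_Lip_less[OF Lip xy(1-3)] .
  also have "\<dots> \<le> v k * w k * (y - x)"
    using k \<open>x < y\<close> by (intro mult_right_mono Min_le) auto
  also have "\<dots> \<le> NN h v w \<theta> y - NN h v w \<theta> x"
    using xy by (intro NN_diff_ge[OF k vw]) auto
  finally show "NN h v w \<theta> x - f x < NN h v w \<theta> y - f y" by simp
qed

lemma integral_residual_Ival_eq_0:
  assumes k: "k \<in> {1..h}" and "v k > 0" "w k > 0"
    and f: "continuous_on UNIV f" and p: "continuous_on UNIV p"
    and grad: "grad_zero h (Loss a b h v w f p) \<theta>"
  shows "integral {Ival_lo a w \<theta> k..Ival_hi b w \<theta> k} (\<lambda>x. (NN h v w \<theta> x - f x) * p x) = 0"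
proof -
  define g where "g x = NN h v w \<theta> x - f x" for x
  define \<Delta> where "\<Delta> s x = v k * (clip (w k * x + \<theta> k + s) - clip (w k * x + \<theta> k))" for s x
  define \<rho> where "\<rho> x = v k * indicator {0..<1} (w k * x + \<theta> k)" for x
  define L where "L = Loss a b h v w f p"
  have L_upd: "L (\<theta>(k := \<theta> k + s)) = integral {a..b} (\<lambda>x. (g x + \<Delta> s x)\<^sup>2 * p x)" for s
    unfolding L_def Loss_def NN_fun_upd[OF k] g_def \<Delta>_def by (simp add: algebra_simps)
  have L: "L \<theta> = integral {a..b} (\<lambda>x. (g x)\<^sup>2 * p x)"
    unfolding L_def Loss_def g_def ..
  have "((\<lambda>t. L (\<theta>(k := t))) has_real_derivative 0) (at (\<theta> k))"
    using grad k unfolding grad_zero_def L_def by auto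
  \<comment> \<open>\<open>clip\<close> has kinks at \<open>0\<close> and \<open>1\<close>, so only the right difference quotients are computed.\<close>
  then have "((\<lambda>s. (L (\<theta>(k := \<theta> k + s)) - L \<theta>) / s) \<longlongrightarrow> 0) (at_right 0)"
    unfolding DERIV_def by (auto intro: tendsto_mono[OF at_le])
  moreover have "((\<lambda>s. (L (\<theta>(k := \<theta> k + s)) - L \<theta>) / s) \<longlongrightarrow> integral {a..b} (\<lambda>x. 2 * g x * \<rho> x * p x)) (at_right 0)"
    unfolding L_upd L
  proof (rule weighted_square_integral_right_derivative)
    show "continuous_on {a..b} g" "continuous_on {a..b} p" "continuous_on {a..b} (\<Delta> s)" for s
      unfolding g_def \<Delta>_def
      by (intro continuous_intros continuous_on_subset[OF f] continuous_on_subset[OF p] subset_UNIV)+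
    show "\<bar>\<Delta> s x\<bar> \<le> \<bar>v k\<bar> * s" if "0 < s" for s x
      using abs_clip_diff_le[of "w k * x + \<theta> k" s] that unfolding \<Delta>_def by (simp add: abs_mult mult_left_mono)
    show "\<forall>\<^sub>F s in at_right 0. \<Delta> s x = s * \<rho> x" for x
      using eventually_clip_increment[of "w k * x + \<theta> k"] by eventually_elim (simp add: \<Delta>_def \<rho>_def)
  qed
  ultimately have "0 = integral {a..b} (\<lambda>x. 2 * g x * \<rho> x * p x)"
    by (rule tendsto_unique[OF trivial_limit_at_right_real])
  also have "(\<lambda>x. 2 * g x * \<rho> x * p x)
      = (\<lambda>x. 2 * v k * (indicator {psi w \<theta> k..<psi w \<theta> k + 1 / w k} x * (g x * p x)))"
    using affine_in_Ico_01_iff[of w k] \<open>w k > 0\<close> by (auto simp: \<rho>_def indicator_def fun_eq_iff)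
  also have "integral {a..b} \<dots> = 2 * v k * integral {Ival_lo a w \<theta> k..Ival_hi b w \<theta> k} (\<lambda>x. g x * p x)"
    unfolding integral_mult_right integral_indicator_Ico_mult Ival_lo_def Ival_hi_def ..
  finally show ?thesis
    using \<open>v k > 0\<close> unfolding g_def by simp
qed

lemma Ival_crossing_impossible:
  assumes vw: "\<forall>k \<in> {1..h}. v k > 0 \<and> w k > 0"
    and f: "continuous_on UNIV f" and p: "continuous_on UNIV p"
    and p_nonneg: "\<forall>x. p x \<ge> 0" and supp: "{x. p x > 0} = {a<..<b}"
    and Lip: "Lip f a b < ereal (Min ((\<lambda>k. v k * w k) ` {1..h}))"
    and grad: "grad_zero h (Loss a b h v w f p) \<theta>"
    and ij: "i \<in> {1..h}" "j \<in> {1..h}"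
    and cross: "Ival_lo a w \<theta> i < Ival_lo a w \<theta> j" "Ival_lo a w \<theta> j < Ival_hi b w \<theta> i"
      "Ival_hi b w \<theta> i < Ival_hi b w \<theta> j"
  shows False
proof (rule crossing_weighted_integrals_not_both_zero[OF cross])
  show "strict_mono_on {Ival_lo a w \<theta> i..Ival_hi b w \<theta> j} (\<lambda>x. NN h v w \<theta> x - f x)"
    using cross
    by (intro strict_mono_on_Icc_Un[OF residual_strict_mono_on_Ival[OF ij(1) vw Lip]
          residual_strict_mono_on_Ival[OF ij(2) vw Lip]]) simp
  show "continuous_on {Ival_lo a w \<theta> i..Ival_hi b w \<theta> j} (\<lambda>x. NN h v w \<theta> x - f x)"
    "continuous_on {Ival_lo a w \<theta> i..Ival_hi b w \<theta> j} p"
    by (intro continuous_intros continuous_on_subset[OF f] continuous_on_subset[OF p] subset_UNIV)+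
  show "\<forall>x\<in>{Ival_lo a w \<theta> i..Ival_hi b w \<theta> j}. 0 \<le> p x"
    using p_nonneg by simp
  have "{Ival_lo a w \<theta> i<..<Ival_hi b w \<theta> j} \<subseteq> {a<..<b}"
    unfolding Ival_lo_def Ival_hi_def by auto
  then show "\<forall>x\<in>{Ival_lo a w \<theta> i<..<Ival_hi b w \<theta> j}. 0 < p x"
    using supp by blast
  show "integral {Ival_lo a w \<theta> i..Ival_hi b w \<theta> i} (\<lambda>x. (NN h v w \<theta> x - f x) * p x) = 0"
    "integral {Ival_lo a w \<theta> j..Ival_hi b w \<theta> j} (\<lambda>x. (NN h v w \<theta> x - f x) * p x) = 0"
    using vw ij by (auto intro: integral_residual_Ival_eq_0[OF _ _ _ f p grad])
qed

theorem lemma2p5: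
  fixes a b :: real and h :: nat and v w \<theta> :: "nat \<Rightarrow> real"
    and f p :: "real \<Rightarrow> real" and i j :: nat
  assumes "a < b"
    and "\<forall>k \<in> {1..h}. v k > 0 \<and> w k > 0"
    and "continuous_on UNIV f" and "continuous_on UNIV p"
    and "\<forall>x. p x \<ge> 0"
    and "{x. p x > 0} = {a<..<b}"
    and "Lip f a b < ereal (Min ((\<lambda>k. v k * w k) ` {1..h}))"
    and "grad_zero h (Loss a b h v w f p) \<theta>"
    and "i \<in> {1..h}" and "j \<in> {1..h}"
    and "Ival a b w \<theta> i \<inter> Ival a b w \<theta> j \<noteq> {}"
  shows "Ival a b w \<theta> i \<subseteq> Ival a b w \<theta> j \<or> Ival a b w \<theta> j \<subseteq> Ival a b w \<theta> i"
proof (rule ccontr)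
  assume "\<not> ?thesis"
  with assms(11) consider
      "Ival_lo a w \<theta> i < Ival_lo a w \<theta> j" "Ival_lo a w \<theta> j < Ival_hi b w \<theta> i" "Ival_hi b w \<theta> i < Ival_hi b w \<theta> j"
    | "Ival_lo a w \<theta> j < Ival_lo a w \<theta> i" "Ival_lo a w \<theta> i < Ival_hi b w \<theta> j" "Ival_hi b w \<theta> j < Ival_hi b w \<theta> i"
    unfolding Ival_eq_Ioo using Ioo_overlap_cases by blast
  then show False
  proof cases
    case 1
    then show False by (rule Ival_crossing_impossible[OF assms(2-10)])
  next
    case 2
    then show False by (rule Ival_crossing_impossible[OF assms(2-8) assms(10,9)])
  qed
qed

end
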